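(* For any integers $n\ge1$ and $m\ge1$ there exist instances of the dynamic model in the context with $|\mathcal U_0|\ge n$ and $|\mathcal C_0|\ge m$ such that $\mathrm{LTE}(\mathbf{FL})>0$ and $$\frac{\mathrm{LTE}(\mathbf{UC})}{\mathrm{LTE}(\mathbf{FL})}=0.$$
   Context: An instance consists of a dimension $D$, users $\mathcal U_0=\{1,\dots,U\}$ with types $u_i\in\mathbb R^D_{\ge0}$, creators $\mathcal C_0=\{1,\dots,C\}$ with types $c_j\in\mathbb R^D_{\ge 0}$, all of Euclidean norm $1$, a positive integer $K$, a creator threshold $\bar a\in\mathbb N_0$ and a user threshold $\bar e\in[0,1]$. Time $t=0,1,2,\dots$; at time $t$ the platform has sets $\mathcal U_t\subseteq\mathcal U_0$, $\mathcal C_t\subseteq\mathcal C_0$ and chooses a recommendation $R_t$ assigning each $i\in\mathcal U_t$ a set $R_t(i)\subseteq\mathcal C_t$ of size $K$ (of smaller size only if necessary, e.g. $|\mathcal C_t|<K$). Engagement is $E(\mathcal U,\mathcal C,R)=\sum_{i\in\mathcal U}\sum_{j\in R(i)}u_i^Tc_j$. Then $\mathcal U_{t+1}=\{i\in\mathcal U_t:|R_t(i)|=K,\ u_i^Tc_j\ge\bar e\ \forall j\in R_t(i)\}$ and $\mathcal C_{t+1}=\{j\in\mathcal C_t:|\{i\in\mathcal U_t:j\in R_t(i)\}|\ge\bar a\}$. For a sequence $\mathbf R=(R_0,R_1,\dots)$, $\mathrm{LTE}(\mathbf R)=\lim_{T\to\infty}\frac1T\sum_{t=0}^{T-1}E(\mathcal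 U_t,\mathcal C_t,R_t)$. $\mathbf{FL}$ denotes any sequence maximizing $\mathrm{LTE}$. $\mathbf{UC}$ is the user-centric sequence with $UC_t(i)\in\arg\max_{S\subseteq\mathcal C_t,|S|\le K}\sum_{j\in S}u_i^Tc_j$ for all $t$ and $i\in\mathcal U_t$ (each user gets her $K$ highest-engagement remaining creators, or all remaining creators if fewer than $K$). *)

theory Defs
  imports Complex_Main
begin

text \<open>An instance of the dynamic recommendation model. Vectors in R^D are
  represented as functions nat \<Rightarrow> real, only coordinates k < D matter.
  Users are 1..U, creators are 1..C.\<close>

record rinstance =
  dim :: nat
  nU :: nat
  nC :: nat
  utype :: "nat \<Rightarrow> nat \<Rightarrow> real"
  ctype :: "nat \<Rightarrow> nat \<Rightarrow> real"
  kK :: nat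
  abar :: nat
  ebar :: real

definition unit_nonneg :: "nat \<Rightarrow> (nat \<Rightarrow> real) \<Rightarrow> bool" where
  "unit_nonneg D v \<longleftrightarrow> (\<forall>k<D. v k \<ge> 0) \<and> sqrt (\<Sum>k<D. (v k)\<^sup>2) = 1"

definition wf_instance :: "rinstance \<Rightarrow> bool" where
  "wf_instance I \<longleftrightarrow>
     (\<forall>i\<in>{1..nU I}. unit_nonneg (dim I) (utype I i)) \<and>
     (\<forall>j\<in>{1..nC I}. unit_nonneg (dim I) (ctype I j)) \<and>
     kK I \<ge> 1 \<and> 0 \<le> ebar I \<and> ebar I \<le> 1"

definition eng :: "rinstance \<Rightarrow> nat \<Rightarrow> nat \<Rightarrow> real" where
  "eng I i j = (\<Sum>k<dim I. utype I i k * ctype I j k)"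

type_synonym recommendation = "nat \<Rightarrow> nat set"

definition engagement :: "rinstance \<Rightarrow> nat set \<Rightarrow> recommendation \<Rightarrow> real" where
  "engagement I Us R = (\<Sum>i\<in>Us. \<Sum>j\<in>R i. eng I i j)"

definition valid_rec :: "rinstance \<Rightarrow> nat set \<Rightarrow> nat set \<Rightarrow> recommendation \<Rightarrow> bool" where
  "valid_rec I Us Cs R \<longleftrightarrow> (\<forall>i\<in>Us. R i \<subseteq> Cs \<and> card (R i) = min (kK I) (card Cs))"

definition next_users :: "rinstance \<Rightarrow> nat set \<Rightarrow> recommendation \<Rightarrow> nat set" where
  "next_users I Us R = {i\<in>Us. card (R i) = kK I \<and> (\<forall>j\<in>R i. eng I i j \<ge> ebar I)}"

definition next_creators :: "rinstance \<Rightarrow> nat set \<Rightarrow> nat set \<Rightarrow> recommendation \<Rightarrow> nat set" where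
  "next_creators I Us Cs R = {j\<in>Cs. card {i\<in>Us. j \<in> R i} \<ge> abar I}"

fun state :: "rinstance \<Rightarrow> (nat \<Rightarrow> recommendation) \<Rightarrow> nat \<Rightarrow> nat set \<times> nat set" where
  "state I Rs 0 = ({1..nU I}, {1..nC I})"
| "state I Rs (Suc t) =
     (let (Us, Cs) = state I Rs t
      in (next_users I Us (Rs t), next_creators I Us Cs (Rs t)))"

definition users_at :: "rinstance \<Rightarrow> (nat \<Rightarrow> recommendation) \<Rightarrow> nat \<Rightarrow> nat set" where
  "users_at I Rs t = fst (state I Rs t)"

definition creators_at :: "rinstance \<Rightarrow> (nat \<Rightarrow> recommendation) \<Rightarrow> nat \<Rightarrow> nat set" where
  "creators_at I Rs t = snd (state I Rs t)"

definition feasible :: "rinstance \<Rightarrow> (nat \<Rightarrow> recommendation) \<Rightarrow> bool" where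
  "feasible I Rs \<longleftrightarrow> (\<forall>t. valid_rec I (users_at I Rs t) (creators_at I Rs t) (Rs t))"

definition avg_eng :: "rinstance \<Rightarrow> (nat \<Rightarrow> recommendation) \<Rightarrow> nat \<Rightarrow> real" where
  "avg_eng I Rs T = (\<Sum>t<T. engagement I (users_at I Rs t) (Rs t)) / real T"

definition has_LTE :: "rinstance \<Rightarrow> (nat \<Rightarrow> recommendation) \<Rightarrow> bool" where
  "has_LTE I Rs \<longleftrightarrow> convergent (avg_eng I Rs)"

definition LTE :: "rinstance \<Rightarrow> (nat \<Rightarrow> recommendation) \<Rightarrow> real" where
  "LTE I Rs = lim (avg_eng I Rs)"

definition is_FL :: "rinstance \<Rightarrow> (nat \<Rightarrow> recommendation) \<Rightarrow> bool" where
  "is_FL I Rs \<longleftrightarrow> feasible I Rs \<and> has_LTE I Rs \<and>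
     (\<forall>Rs'. feasible I Rs' \<and> has_LTE I Rs' \<longrightarrow> LTE I Rs' \<le> LTE I Rs)"

definition is_UC :: "rinstance \<Rightarrow> (nat \<Rightarrow> recommendation) \<Rightarrow> bool" where
  "is_UC I Rs \<longleftrightarrow> feasible I Rs \<and>
     (\<forall>t. \<forall>i\<in>users_at I Rs t.
        \<forall>S. S \<subseteq> creators_at I Rs t \<and> card S \<le> kK I \<longrightarrow>
          (\<Sum>j\<in>S. eng I i j) \<le> (\<Sum>j\<in>Rs t i. eng I i j))"

end

theory Submission
  imports Defs
begin

(*
  Users 1, ..., n and creators 2, ..., m + 1 have type e_0; users n + 1, ..., 2n and creator 1
  have type e_1. With K = 1 and creator threshold 2n, a creator survives a round only if it is
  shown to every user. User-centric recommendations split the users between the two types, so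
  every creator leaves after the first round and LTE(UC) = 0. Showing creator 2 to everybody keeps
  it alive and earns n per round; conversely, after the first round at most one creator remains,
  and its engagements sum to n over all users, so LTE(FL) = n.
*)

lemma users_at_0 [simp]: "users_at I Rs 0 = {1..nU I}"
  by (simp add: users_at_def)

lemma creators_at_0 [simp]: "creators_at I Rs 0 = {1..nC I}"
  by (simp add: creators_at_def)

lemma users_at_Suc:
  "users_at I Rs (Suc t) = next_users I (users_at I Rs t) (Rs t)"
  by (simp add: users_at_def creators_at_def case_prod_beta)

lemma creators_at_Suc:
  "creators_at I Rs (Suc t) = next_creators I (users_at I Rs t) (creators_at I Rs t) (Rs t)"
  by (simp add: users_at_def creators_at_def case_prod_beta)

lemma users_at_subset: "users_at I Rs t \<subseteq> {1..nU I}"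
  by (induction t) (auto simp: users_at_Suc next_users_def)

lemma creators_at_subset: "creators_at I Rs t \<subseteq> {1..nC I}"
  by (induction t) (auto simp: creators_at_Suc next_creators_def)

lemma finite_creators_at: "finite (creators_at I Rs t)"
  by (rule finite_subset[OF creators_at_subset]) simp

lemma decseq_creators_at: "decseq (creators_at I Rs)"
  by (rule decseq_SucI) (auto simp: creators_at_Suc next_creators_def)

lemma eng_nonneg:
  assumes "wf_instance I" "i \<in> {1..nU I}" "j \<in> {1..nC I}"
  shows "0 \<le> eng I i j"
  using assms unfolding wf_instance_def unit_nonneg_def eng_def
  by (intro sum_nonneg mult_nonneg_nonneg) auto

lemma engagement_no_creators:
  assumes "valid_rec I Us {} R"
  shows "engagement I Us R = 0"
  using assms by (simp add: valid_rec_def engagement_def)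

lemma engagement_le_column_sums:
  assumes wf: "wf_instance I" and R: "valid_rec I Us Cs R"
    and Us: "Us \<subseteq> {1..nU I}" and Cs: "Cs \<subseteq> {1..nC I}"
  shows "engagement I Us R \<le> (\<Sum>j\<in>Cs. \<Sum>i\<in>{1..nU I}. eng I i j)"
proof -
  have fin: "finite Cs" using Cs finite_subset by blast
  have "engagement I Us R \<le> (\<Sum>i\<in>Us. \<Sum>j\<in>Cs. eng I i j)"
    unfolding engagement_def
  proof (rule sum_mono, rule sum_mono2)
    fix i assume "i \<in> Us"
    then show "R i \<subseteq> Cs" using R by (simp add: valid_rec_def)
    show "0 \<le> eng I i j" if "j \<in> Cs - R i" for j
      using \<open>i \<in> Us\<close> that Us Cs by (intro eng_nonneg[OF wf]) auto
  qed (rule fin)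
  also have "\<dots> = (\<Sum>j\<in>Cs. \<Sum>i\<in>Us. eng I i j)"
    by (rule sum.swap)
  also have "\<dots> \<le> (\<Sum>j\<in>Cs. \<Sum>i\<in>{1..nU I}. eng I i j)"
    using Us Cs eng_nonneg[OF wf] by (intro sum_mono sum_mono2) auto
  finally show ?thesis .
qed

lemma card_creators_at_Suc_le:
  assumes feas: "feasible I Rs" and "1 \<le> nU I" and "nU I \<le> abar I"
  shows "card (creators_at I Rs (Suc t)) \<le> kK I"
proof -
  let ?U = "users_at I Rs t" and ?C' = "creators_at I Rs (Suc t)"
  have valid: "valid_rec I ?U (creators_at I Rs t) (Rs t)"
    using feas by (simp add: feasible_def)
  have shown_to_1: "1 \<in> ?U \<and> j \<in> Rs t 1" if j: "j \<in> ?C'" for j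
  proof -
    have "{i\<in>?U. j \<in> Rs t i} \<subseteq> {1..nU I}"
      using users_at_subset by blast
    moreover have "card {1..nU I} \<le> card {i\<in>?U. j \<in> Rs t i}"
      using j assms(3) by (simp add: creators_at_Suc next_creators_def)
    ultimately have "{i\<in>?U. j \<in> Rs t i} = {1..nU I}"
      by (intro card_seteq) auto
    then have "1 \<in> {i\<in>?U. j \<in> Rs t i}"
      using assms(2) by simp
    then show ?thesis by simp
  qed
  show ?thesis
  proof (cases "?C' = {}")
    case False
    then have "1 \<in> ?U" and sub: "?C' \<subseteq> Rs t 1"
      using shown_to_1 by blast+
    then have shown: "Rs t 1 \<subseteq> creators_at I Rs t" and "card (Rs t 1) \<le> kK I"
      using valid by (auto simp: valid_rec_def)
    moreover have "card ?C' \<le> card (Rs t 1)"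
      using sub shown finite_creators_at by (meson card_mono finite_subset)
    ultimately show ?thesis
      by linarith
  qed simp
qed

lemma cesaro_mean_tendsto_if_Suc_const:
  fixes f :: "nat \<Rightarrow> real"
  assumes "\<And>t. f (Suc t) = c"
  shows "(\<lambda>T. (\<Sum>t<T. f t) / real T) \<longlonglongrightarrow> c"
proof -
  have mean_eq: "(\<Sum>t<T. f t) / real T = c + (f 0 - c) / real T" if "T \<ge> 1" for T
  proof -
    obtain T' where T: "T = Suc T'" using \<open>T \<ge> 1\<close> by (cases T) auto
    have "(\<Sum>t<T. f t) = f 0 + real T' * c"
      unfolding T sum.lessThan_Suc_shift by (simp add: assms)
    then show ?thesis by (simp add: T field_simps)
  qed
  have "\<forall>\<^sub>F T in sequentially. c + (f 0 - c) / real T = (\<Sum>t<T. f t) / real T"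
    using eventually_ge_at_top[of 1] by eventually_elim (simp add: mean_eq)
  moreover have "(\<lambda>T. c + (f 0 - c) / real T) \<longlonglongrightarrow> c + 0"
    by (intro tendsto_add tendsto_const lim_const_over_n)
  ultimately show ?thesis
    by (simp add: Lim_transform_eventually)
qed

lemma cesaro_limit_le_if_Suc_le:
  fixes f :: "nat \<Rightarrow> real"
  assumes le: "\<And>t. f (Suc t) \<le> c"
    and lim: "(\<lambda>T. (\<Sum>t<T. f t) / real T) \<longlonglongrightarrow> L"
  shows "L \<le> c"
proof -
  define g where "g = case_nat (f 0) (\<lambda>_. c)"
  have "(\<lambda>T. (\<Sum>t<T. g t) / real T) \<longlonglongrightarrow> c"
    by (rule cesaro_mean_tendsto_if_Suc_const) (simp add: g_def)
  moreover have "(\<Sum>t<T. f t) / real T \<le> (\<Sum>t<T. g t) / real T" for T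
    using le by (intro divide_right_mono sum_mono) (simp_all add: g_def split: nat.split)
  ultimately show ?thesis
    using lim by (intro LIMSEQ_le) auto
qed

lemma LTE_eq_if_Suc_const:
  assumes "\<And>t. engagement I (users_at I Rs (Suc t)) (Rs (Suc t)) = c"
  shows "has_LTE I Rs" and "LTE I Rs = c"
proof -
  have "avg_eng I Rs \<longlonglongrightarrow> c"
    unfolding avg_eng_def[abs_def] by (rule cesaro_mean_tendsto_if_Suc_const) (rule assms)
  then show "has_LTE I Rs" and "LTE I Rs = c"
    by (auto simp: has_LTE_def LTE_def convergentI limI)
qed

lemma LTE_le_if_Suc_le:
  assumes "has_LTE I Rs" and "\<And>t. engagement I (users_at I Rs (Suc t)) (Rs (Suc t)) \<le> c"
  shows "LTE I Rs \<le> c"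
proof (rule cesaro_limit_le_if_Suc_le)
  show "(\<lambda>T. (\<Sum>t<T. engagement I (users_at I Rs t) (Rs t)) / real T) \<longlonglongrightarrow> LTE I Rs"
    using assms(1) unfolding has_LTE_def LTE_def avg_eng_def[abs_def]
    by (simp add: convergent_LIMSEQ_iff)
qed (rule assms(2))

definition user_optimal :: "rinstance \<Rightarrow> nat set \<Rightarrow> nat set \<Rightarrow> recommendation \<Rightarrow> bool" where
  "user_optimal I Us Cs R \<longleftrightarrow>
     (\<forall>i\<in>Us. \<forall>S. S \<subseteq> Cs \<and> card S \<le> kK I \<longrightarrow>
        (\<Sum>j\<in>S. eng I i j) \<le> (\<Sum>j\<in>R i. eng I i j))"

lemma is_UC_iff_user_optimal:
  "is_UC I Rs \<longleftrightarrow>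
     feasible I Rs \<and> (\<forall>t. user_optimal I (users_at I Rs t) (creators_at I Rs t) (Rs t))"
  by (simp add: is_UC_def user_optimal_def)

definition polarized :: "nat \<Rightarrow> nat \<Rightarrow> rinstance" where
  "polarized n m =
     \<lparr>dim = 2, nU = 2 * n, nC = m + 1,
      utype = (\<lambda>i k. if (k = 0) = (i \<le> n) then 1 else 0),
      ctype = (\<lambda>j k. if (k = 0) = (j \<noteq> 1) then 1 else 0),
      kK = 1, abar = 2 * n, ebar = 0\<rparr>"

lemma polarized_simps [simp]:
  "dim (polarized n m) = 2" "nU (polarized n m) = 2 * n" "nC (polarized n m) = m + 1"
  "kK (polarized n m) = 1" "abar (polarized n m) = 2 * n" "ebar (polarized n m) = 0"
  by (simp_all add: polarized_def)

lemma eng_polarized: "eng (polarized n m) i j = (if (i \<le> n) = (j \<noteq> 1) then 1 else 0)"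
  by (simp add: eng_def polarized_def numeral_2_eq_2 lessThan_Suc)

lemma wf_instance_polarized: "wf_instance (polarized n m)"
  by (simp add: wf_instance_def unit_nonneg_def polarized_def numeral_2_eq_2 lessThan_Suc)

lemma audience_polarized:
  fixes n j :: nat
  shows "{i\<in>{1..2 * n}. (i \<le> n) = (j \<noteq> 1)} = (if j = 1 then {n+1..2 * n} else {1..n})"
  by auto

lemma column_sum_polarized: "(\<Sum>i\<in>{1..2 * n}. eng (polarized n m) i j) = real n"
proof -
  have "(\<Sum>i\<in>{1..2 * n}. eng (polarized n m) i j)
      = real (card {i\<in>{1..2 * n}. (i \<le> n) = (j \<noteq> 1)})"
    by (simp add: eng_polarized flip: sum.inter_filter)
  also have "\<dots> = real n"
    unfolding audience_polarized by simp
  finally show ?thesis .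
qed

lemma LTE_polarized_le:
  assumes "1 \<le> n" and feas: "feasible (polarized n m) Rs" and "has_LTE (polarized n m) Rs"
  shows "LTE (polarized n m) Rs \<le> real n"
proof (rule LTE_le_if_Suc_le)
  fix t
  let ?I = "polarized n m" and ?C = "creators_at (polarized n m) Rs (Suc t)"
  have "valid_rec ?I (users_at ?I Rs (Suc t)) ?C (Rs (Suc t))"
    using feas by (simp add: feasible_def)
  then have "engagement ?I (users_at ?I Rs (Suc t)) (Rs (Suc t))
      \<le> (\<Sum>j\<in>?C. \<Sum>i\<in>{1..2 * n}. eng ?I i j)"
    using engagement_le_column_sums[OF wf_instance_polarized _ users_at_subset creators_at_subset]
    by simp
  also have "\<dots> = real (card ?C) * real n"
    by (simp only: column_sum_polarized sum_constant)
  also have "\<dots> \<le> real n"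
    using card_creators_at_Suc_le[OF feas, of t] \<open>1 \<le> n\<close> by simp
  finally show "engagement ?I (users_at ?I Rs (Suc t)) (Rs (Suc t)) \<le> real n" .
qed fact

definition unanimous :: "nat \<Rightarrow> recommendation" where
  "unanimous t i = {2}"

lemma users_at_unanimous: "users_at (polarized n m) unanimous t = {1..2 * n}"
proof (induction t)
  case (Suc t)
  have "0 \<le> eng (polarized n m) i 2" for i
    by (simp add: eng_polarized)
  then show ?case
    using Suc by (auto simp: users_at_Suc next_users_def unanimous_def)
qed simp

lemma creator_2_at_unanimous:
  assumes "1 \<le> m"
  shows "2 \<in> creators_at (polarized n m) unanimous t"
proof (induction t)
  case (Suc t)
  have "{i\<in>{1..2 * n}. 2 \<in> unanimous t i} = {1..2 * n}"
    by (auto simp: unanimous_def)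
  then show ?case
    using Suc by (simp add: creators_at_Suc next_creators_def users_at_unanimous)
qed (use assms in simp)

lemma feasible_unanimous:
  assumes "1 \<le> m"
  shows "feasible (polarized n m) unanimous"
proof -
  have "card (creators_at (polarized n m) unanimous t) \<ge> 1" for t
    using creator_2_at_unanimous[OF assms, of n t] finite_creators_at
    by (auto simp: Suc_le_eq card_gt_0_iff)
  then show ?thesis
    using creator_2_at_unanimous[OF assms]
    by (simp add: feasible_def valid_rec_def unanimous_def)
qed

lemma LTE_unanimous: "has_LTE (polarized n m) unanimous" "LTE (polarized n m) unanimous = real n"
proof -
  have "engagement (polarized n m) (users_at (polarized n m) unanimous t) (unanimous t) = real n" for t
    using column_sum_polarized[of n m 2]
    by (simp add: engagement_def users_at_unanimous unanimous_def)
  then show "has_LTE (polarized n m) unanimous" "LTE (polarized n m) unanimous = real n"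
    by (rule LTE_eq_if_Suc_const)+
qed

lemma is_FL_unanimous:
  assumes "1 \<le> n" "1 \<le> m"
  shows "is_FL (polarized n m) unanimous"
  using feasible_unanimous[OF assms(2)] LTE_unanimous LTE_polarized_le[OF assms(1)]
  by (simp add: is_FL_def)

lemma next_creators_polarized_user_optimal:
  assumes "1 \<le> n" "1 \<le> m"
    and valid: "valid_rec (polarized n m) {1..2 * n} {1..m + 1} R"
    and opt: "user_optimal (polarized n m) {1..2 * n} {1..m + 1} R"
  shows "next_creators (polarized n m) {1..2 * n} {1..m + 1} R = {}"
proof -
  let ?I = "polarized n m"
  have liked: "eng ?I i j = 1" if i: "i \<in> {1..2 * n}" and j: "j \<in> R i" for i j
  proof -
    have "card (R i) = 1"
      using valid i by (simp add: valid_rec_def)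
    then obtain x where Ri: "R i = {x}"
      by (rule card_1_singletonE)
    define y where "y = (if i \<le> n then 2 else 1 :: nat)"
    have "{y} \<subseteq> {1..m + 1}" and y_liked: "eng ?I i y = 1"
      using \<open>1 \<le> m\<close> by (auto simp: y_def eng_polarized)
    then have "(\<Sum>j\<in>{y}. eng ?I i j) \<le> (\<Sum>j\<in>R i. eng ?I i j)"
      using opt[unfolded user_optimal_def, rule_format, OF i, of "{y}"] by simp
    then have "1 \<le> eng ?I i x"
      using Ri y_liked by simp
    then show ?thesis
      using j Ri by (simp add: eng_polarized split: if_splits)
  qed
  have "card {i\<in>{1..2 * n}. j \<in> R i} < 2 * n" for j
  proof -
    have "{i\<in>{1..2 * n}. j \<in> R i} \<subseteq> {i\<in>{1..2 * n}. (i \<le> n) = (j \<noteq> 1)}"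
      using liked by (force simp: eng_polarized split: if_splits)
    then have "card {i\<in>{1..2 * n}. j \<in> R i} \<le> card {i\<in>{1..2 * n}. (i \<le> n) = (j \<noteq> 1)}"
      by (rule card_mono[rotated]) simp
    then have "card {i\<in>{1..2 * n}. j \<in> R i} \<le> n"
      unfolding audience_polarized by (simp split: if_splits)
    then show ?thesis using \<open>1 \<le> n\<close> by linarith
  qed
  then show ?thesis
    by (simp add: next_creators_def not_le)
qed

lemma creators_at_Suc_polarized_user_optimal:
  assumes "1 \<le> n" "1 \<le> m"
    and "valid_rec (polarized n m) {1..2 * n} {1..m + 1} (Rs 0)"
    and "user_optimal (polarized n m) {1..2 * n} {1..m + 1} (Rs 0)"
  shows "creators_at (polarized n m) Rs (Suc t) = {}"
proof -
  have "creators_at (polarized n m) Rs (Suc 0) = {}"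
    using next_creators_polarized_user_optimal[OF assms] by (simp add: creators_at_Suc)
  then show ?thesis
    using decseqD[OF decseq_creators_at, of "Suc 0" "Suc t"] by auto
qed

lemma LTE_polarized_UC:
  assumes "1 \<le> n" "1 \<le> m" and UC: "is_UC (polarized n m) Rs"
  shows "has_LTE (polarized n m) Rs" and "LTE (polarized n m) Rs = 0"
proof -
  let ?I = "polarized n m"
  have valid: "valid_rec ?I (users_at ?I Rs t) (creators_at ?I Rs t) (Rs t)"
    and opt: "user_optimal ?I (users_at ?I Rs t) (creators_at ?I Rs t) (Rs t)" for t
    using UC by (simp_all add: is_UC_iff_user_optimal feasible_def)
  have "creators_at ?I Rs (Suc t) = {}" for t
    using creators_at_Suc_polarized_user_optimal[OF assms(1,2)] valid[of 0] opt[of 0] by simp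
  then have "valid_rec ?I (users_at ?I Rs (Suc t)) {} (Rs (Suc t))" for t
    using valid[of "Suc t"] by simp
  then have "engagement ?I (users_at ?I Rs (Suc t)) (Rs (Suc t)) = 0" for t
    by (rule engagement_no_creators)
  then show "has_LTE ?I Rs" and "LTE ?I Rs = 0"
    by (rule LTE_eq_if_Suc_const)+
qed

definition favourite :: "nat \<Rightarrow> nat \<Rightarrow> recommendation" where
  "favourite n t i = (if t = 0 then if i \<le> n then {2} else {1} else {})"

lemma is_UC_favourite:
  assumes "1 \<le> n" "1 \<le> m"
  shows "is_UC (polarized n m) (favourite n)"
proof -
  let ?I = "polarized n m" and ?Rs = "favourite n"
  have valid0: "valid_rec ?I {1..2 * n} {1..m + 1} (?Rs 0)"
    using assms by (auto simp: valid_rec_def favourite_def)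
  have "(\<Sum>j\<in>S. eng ?I i j) \<le> 1" if "card S \<le> 1" for i S
  proof -
    have "(\<Sum>j\<in>S. eng ?I i j) \<le> real (card S) * 1"
      by (rule sum_bounded_above) (simp add: eng_polarized)
    also have "\<dots> \<le> 1"
      using that by simp
    finally show ?thesis .
  qed
  moreover have "(\<Sum>j\<in>?Rs 0 i. eng ?I i j) = 1" for i
    by (simp add: favourite_def eng_polarized)
  ultimately have opt0: "user_optimal ?I {1..2 * n} {1..m + 1} (?Rs 0)"
    by (simp add: user_optimal_def)
  have empty: "creators_at ?I ?Rs (Suc t) = {}" for t
    by (rule creators_at_Suc_polarized_user_optimal[where Rs = ?Rs, OF assms valid0 opt0])
  show ?thesis
    unfolding is_UC_iff_user_optimal feasible_def
  proof (intro conjI allI)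
    fix t
    show "valid_rec ?I (users_at ?I ?Rs t) (creators_at ?I ?Rs t) (?Rs t)"
      using valid0 empty by (cases t) (simp_all add: valid_rec_def favourite_def)
    show "user_optimal ?I (users_at ?I ?Rs t) (creators_at ?I ?Rs t) (?Rs t)"
      using opt0 empty by (cases t) (simp_all add: user_optimal_def favourite_def)
  qed
qed

theorem theorem3:
  fixes n m :: nat
  assumes "n \<ge> 1" and "m \<ge> 1"
  shows "\<exists>I. wf_instance I \<and> nU I \<ge> n \<and> nC I \<ge> m \<and>
           (\<exists>FL. is_FL I FL) \<and> (\<exists>UC. is_UC I UC) \<and>
           (\<forall>FL. is_FL I FL \<longrightarrow> LTE I FL > 0 \<and>
              (\<forall>UC. is_UC I UC \<longrightarrow> has_LTE I UC \<and> LTE I UC / LTE I FL = 0))"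
proof (intro exI[of _ "polarized n m"] conjI allI impI)
  let ?I = "polarized n m"
  show "wf_instance ?I" by (rule wf_instance_polarized)
  show "nU ?I \<ge> n" and "nC ?I \<ge> m" by simp_all
  show "\<exists>FL. is_FL ?I FL" using is_FL_unanimous[OF assms] by blast
  show "\<exists>UC. is_UC ?I UC" using is_UC_favourite[OF assms] by blast
  fix FL UC
  assume "is_FL ?I FL"
  then have "LTE ?I unanimous \<le> LTE ?I FL"
    using feasible_unanimous[OF assms(2)] LTE_unanimous(1) by (simp add: is_FL_def)
  then show "LTE ?I FL > 0"
    using LTE_unanimous(2) assms(1) by simp
  assume "is_UC ?I UC"
  then show "has_LTE ?I UC" and "LTE ?I UC / LTE ?I FL = 0"
    using LTE_polarized_UC[OF assms] by simp_all
qed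

end
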